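(* Let $F\colon\mathsf{Nom}\to\mathsf{Nom}$ be $FX=1+\mathbb{A}\times X+[\mathbb{A}]X$. The initial $F$-algebra is the nominal set $\overline{\mathbb{A}}^*/{=_\alpha}$ of bar strings modulo $\alpha$-equivalence with the structure $\iota$ given by $\iota( * )=[\varepsilon]_\alpha$, $\iota(a,[w]_\alpha)=[aw]_\alpha$ and $\iota(\langle a\rangle[w]_\alpha)=[\mathord{|}a\,w]_\alpha$.
   Context: Fix a countably infinite set $\mathbb{A}$ of names; $\mathsf{Nom}$ is the category of nominal sets (sets with an action of the group of finite permutations of $\mathbb{A}$ in which each element $x$ has a least finite support $\mathrm{supp}(x)$; $a$ is fresh for $x$, $a\#x$, if $a\notin\mathrm{supp}(x)$) and equivariant maps. $[\mathbb{A}]X$ is the quotient of $\mathbb{A}\times X$ by $(a,x)\sim(b,y)$ iff $(a\,c)\cdot x=(b\,c)\cdot y$ for some fresh $c$, classes written $\langle a\rangle x$. Bar strings are finite words over $\overline{\mathbb{A}}=\mathbb{A}\cup\{\mathord{|}a: a\in\mathbb{A}\}$, with pointwise action; $\mathord{|}a$ binds $a$ to its right. $=_\alpha$ is the least equivalence relation on $\overline{\mathbb{A}}^*$ with $x\,\mathord{|}a\,v=_\alpha x\,\mathord{|}b\,w$ for all $a,b\in\mathbb{A}$, $x,v,w\in\overline{\mathbb{A}}^*$ with $\langle a\rangle v=\langle b\rangle w$ in $[\mathbb{A}]\overline{\mathbb{A}}^*$ (equivalently: $a=b$ and $v=w$, or $b\#v$ and $(a\,b)\cdot v=w$). $[w]_\alpha$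 is the class of $w$; $\overline{\mathbb{A}}^*/{=_\alpha}$ is a nominal set with $\pi\cdot[w]_\alpha=[\pi\cdot w]_\alpha$. *)

theory Defs
  imports Main "HOL-Combinatorics.Perm"
begin

text \<open>The countably infinite set of names is represented by the type nat.
  Finite permutations of names are the library type  name perm
  (bijections moving only finitely many names).\<close>

type_synonym name = nat
type_synonym nperm = "name perm"

definition supports :: "(nperm \<Rightarrow> 'x \<Rightarrow> 'x) \<Rightarrow> name set \<Rightarrow> 'x \<Rightarrow> bool" where
  "supports act S x \<longleftrightarrow> (\<forall>\<pi>. (\<forall>a\<in>S. Perm.apply \<pi> a = a) \<longrightarrow> act \<pi> x = x)"

definition supp :: "(nperm \<Rightarrow> 'x \<Rightarrow> 'x) \<Rightarrow> 'x \<Rightarrow> name set" where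
  "supp act x = \<Inter>{S. finite S \<and> supports act S x}"

definition fresh :: "(nperm \<Rightarrow> 'x \<Rightarrow> 'x) \<Rightarrow> name \<Rightarrow> 'x \<Rightarrow> bool" where
  "fresh act a x \<longleftrightarrow> a \<notin> supp act x"

definition nominal_set :: "'x set \<Rightarrow> (nperm \<Rightarrow> 'x \<Rightarrow> 'x) \<Rightarrow> bool" where
  "nominal_set X act \<longleftrightarrow>
     (\<forall>\<pi>. \<forall>x\<in>X. act \<pi> x \<in> X) \<and>
     (\<forall>x\<in>X. act 1 x = x) \<and>
     (\<forall>\<pi> \<sigma>. \<forall>x\<in>X. act (\<pi> * \<sigma>) x = act \<pi> (act \<sigma> x)) \<and>
     (\<forall>x\<in>X. \<exists>S. finite S \<and> supports act S x \<and>
               (\<forall>S'. finite S' \<and> supports act S' x \<longrightarrow> S \<subseteq> S'))"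

definition equivariant ::
  "'x set \<Rightarrow> (nperm \<Rightarrow> 'x \<Rightarrow> 'x) \<Rightarrow> 'y set \<Rightarrow> (nperm \<Rightarrow> 'y \<Rightarrow> 'y) \<Rightarrow> ('x \<Rightarrow> 'y) \<Rightarrow> bool" where
  "equivariant X actX Y actY f \<longleftrightarrow>
     (\<forall>x\<in>X. f x \<in> Y) \<and> (\<forall>\<pi>. \<forall>x\<in>X. f (actX \<pi> x) = actY \<pi> (f x))"

definition abs_rel :: "(nperm \<Rightarrow> 'x \<Rightarrow> 'x) \<Rightarrow> name \<times> 'x \<Rightarrow> name \<times> 'x \<Rightarrow> bool" where
  "abs_rel act p q \<longleftrightarrow> (case p of (a, x) \<Rightarrow> case q of (b, y) \<Rightarrow>
     (\<exists>c. c \<noteq> a \<and> c \<noteq> b \<and> fresh act c x \<and> fresh act c y \<and>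
          act (Perm.swap a c) x = act (Perm.swap b c) y))"

definition abs_class :: "'x set \<Rightarrow> (nperm \<Rightarrow> 'x \<Rightarrow> 'x) \<Rightarrow> name \<times> 'x \<Rightarrow> (name \<times> 'x) set" where
  "abs_class X act p = {q. snd q \<in> X \<and> abs_rel act p q}"

definition abs_set :: "'x set \<Rightarrow> (nperm \<Rightarrow> 'x \<Rightarrow> 'x) \<Rightarrow> (name \<times> 'x) set set" where
  "abs_set X act = abs_class X act ` (UNIV \<times> X)"

definition abs_act :: "(nperm \<Rightarrow> 'x \<Rightarrow> 'x) \<Rightarrow> nperm \<Rightarrow> (name \<times> 'x) set \<Rightarrow> (name \<times> 'x) set" where
  "abs_act act \<pi> D = (\<lambda>(a, x). (Perm.apply \<pi> a, act \<pi> x)) ` D"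

type_synonym 'x F = "unit + (name \<times> 'x) + (name \<times> 'x) set"

definition F_carrier :: "'x set \<Rightarrow> (nperm \<Rightarrow> 'x \<Rightarrow> 'x) \<Rightarrow> 'x F set" where
  "F_carrier X act = {Inl ()} \<union> Inr ` Inl ` (UNIV \<times> X) \<union> Inr ` Inr ` abs_set X act"

fun F_act :: "(nperm \<Rightarrow> 'x \<Rightarrow> 'x) \<Rightarrow> nperm \<Rightarrow> 'x F \<Rightarrow> 'x F" where
  "F_act act \<pi> (Inl u) = Inl u"
| "F_act act \<pi> (Inr (Inl (a, x))) = Inr (Inl (Perm.apply \<pi> a, act \<pi> x))"
| "F_act act \<pi> (Inr (Inr D)) = Inr (Inr (abs_act act \<pi> D))"

fun F_map :: "'y set \<Rightarrow> (nperm \<Rightarrow> 'y \<Rightarrow> 'y) \<Rightarrow> ('x \<Rightarrow> 'y) \<Rightarrow> 'x F \<Rightarrow> 'y F" where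
  "F_map Y actY h (Inl u) = Inl u"
| "F_map Y actY h (Inr (Inl (a, x))) = Inr (Inl (a, h x))"
| "F_map Y actY h (Inr (Inr D)) =
     Inr (Inr (case (SOME p. p \<in> D) of (a, x) \<Rightarrow> abs_class Y actY (a, h x)))"

definition F_algebra :: "'x set \<Rightarrow> (nperm \<Rightarrow> 'x \<Rightarrow> 'x) \<Rightarrow> ('x F \<Rightarrow> 'x) \<Rightarrow> bool" where
  "F_algebra X act g \<longleftrightarrow>
     nominal_set X act \<and> equivariant (F_carrier X act) (F_act act) X act g"

definition F_alg_hom ::
  "'x set \<Rightarrow> (nperm \<Rightarrow> 'x \<Rightarrow> 'x) \<Rightarrow> ('x F \<Rightarrow> 'x) \<Rightarrow>
   'y set \<Rightarrow> (nperm \<Rightarrow> 'y \<Rightarrow> 'y) \<Rightarrow> ('y F \<Rightarrow> 'y) \<Rightarrow> ('x \<Rightarrow> 'y) \<Rightarrow> bool" where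
  "F_alg_hom X actX f Y actY g h \<longleftrightarrow>
     equivariant X actX Y actY h \<and>
     (\<forall>z\<in>F_carrier X actX. h (f z) = g (F_map Y actY h z))"

definition initial_F_algebra :: "'x set \<Rightarrow> (nperm \<Rightarrow> 'x \<Rightarrow> 'x) \<Rightarrow> ('x F \<Rightarrow> 'x) \<Rightarrow> 'y itself \<Rightarrow> bool" where
  "initial_F_algebra X act f (TYPE('y)) \<longleftrightarrow>
     F_algebra X act f \<and>
     (\<forall>(Y :: 'y set) actY g. F_algebra Y actY g \<longrightarrow>
        (\<exists>h. F_alg_hom X act f Y actY g h \<and>
             (\<forall>h'. F_alg_hom X act f Y actY g h' \<longrightarrow> (\<forall>x\<in>X. h' x = h x))))"

datatype barname = Nm name | Bar name

type_synonym barstring = "barname list"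

fun barname_act :: "nperm \<Rightarrow> barname \<Rightarrow> barname" where
  "barname_act \<pi> (Nm a) = Nm (Perm.apply \<pi> a)"
| "barname_act \<pi> (Bar a) = Bar (Perm.apply \<pi> a)"

definition bs_act :: "nperm \<Rightarrow> barstring \<Rightarrow> barstring" where
  "bs_act \<pi> w = map (barname_act \<pi>) w"

inductive alpha_eq :: "barstring \<Rightarrow> barstring \<Rightarrow> bool" where
  alpha_refl: "alpha_eq w w"
| alpha_sym: "alpha_eq v w \<Longrightarrow> alpha_eq w v"
| alpha_trans: "alpha_eq u v \<Longrightarrow> alpha_eq v w \<Longrightarrow> alpha_eq u w"
| alpha_bind: "abs_class UNIV bs_act (a, v) = abs_class UNIV bs_act (b, w) \<Longrightarrow>
               alpha_eq (x @ Bar a # v) (x @ Bar b # w)"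

definition alpha_class :: "barstring \<Rightarrow> barstring set" where
  "alpha_class w = {v. alpha_eq w v}"

definition BS_alpha :: "barstring set set" where
  "BS_alpha = range alpha_class"

definition BS_alpha_act :: "nperm \<Rightarrow> barstring set \<Rightarrow> barstring set" where
  "BS_alpha_act \<pi> C = bs_act \<pi> ` C"

fun iota :: "barstring set F \<Rightarrow> barstring set" where
  "iota (Inl u) = alpha_class []"
| "iota (Inr (Inl (a, C))) = alpha_class (Nm a # (SOME w. w \<in> C))"
| "iota (Inr (Inr D)) =
     (case (SOME p. p \<in> D) of (a, C) \<Rightarrow> alpha_class (Bar a # (SOME w. w \<in> C)))"

end

theory Submission
  imports Defs
begin

(* Bar strings are the terms of the signature epsilon, a w, |a w, so every F-algebra (Y, g) receives
   a fold of bar strings.  Equivariance of g makes the fold equivariant; equivariant maps do not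
   enlarge supports, hence preserve the abstraction relation, so the fold identifies
   alpha-equivalent strings and descends to the quotient.  The key fact on the quotient side is that
   a permutation fixing the free names of w maps w to an alpha-equivalent string: thus the class of
   w has exactly the free names of w as support, and an equality of abstractions <a>[v] = <b>[w] can
   be tested with a name fresh for all of v and w, which makes iota well defined on abstractions. *)

unbundle permutation_syntax

lemma apply_inverse_apply [simp]: "inverse p \<langle>$\<rangle> (p \<langle>$\<rangle> a) = a"
  by (simp add: apply_inverse bij_is_inj)

lemma apply_apply_inverse [simp]: "p \<langle>$\<rangle> (inverse p \<langle>$\<rangle> a) = a"
  by (simp add: apply_inverse bij_is_surj surj_f_inv_f)

lemma apply_swap: "\<langle>a \<leftrightarrow> b\<rangle> \<langle>$\<rangle> c = (if c = a then b else if c = b then a else c)"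
  by auto

lemma swap_times_swap_apply:
  "e \<noteq> b \<Longrightarrow> e \<noteq> c \<Longrightarrow> (\<langle>b \<leftrightarrow> c\<rangle> * \<langle>a \<leftrightarrow> b\<rangle>) \<langle>$\<rangle> e = \<langle>a \<leftrightarrow> c\<rangle> \<langle>$\<rangle> e"
  by (auto simp: apply_times apply_swap)

lemma swap_conj: "\<langle>p \<langle>$\<rangle> a \<leftrightarrow> p \<langle>$\<rangle> b\<rangle> * p = p * \<langle>a \<leftrightarrow> b\<rangle>"
  by (intro perm_eqI) (auto simp: apply_times apply_swap apply_inj)

lemma obtain_fresh_name:
  assumes "finite (S :: name set)"
  obtains c where "c \<notin> S"
  using assms ex_new_if_finite infinite_UNIV_nat by blast

section \<open>Nominal sets\<close>

lemma supp_subset_supports: "finite S \<Longrightarrow> supports act S x \<Longrightarrow> supp act x \<subseteq> S"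
  unfolding supp_def by blast

lemma supports_stable_subset:
  assumes "finite S" "supports act S x" "finite N"
    and stable: "\<And>p. act p x = x \<Longrightarrow> (\<langle>$\<rangle>) p ` N = N"
  shows "N \<subseteq> S"
proof
  fix a assume "a \<in> N"
  show "a \<in> S"
  proof (rule ccontr)
    assume "a \<notin> S"
    obtain b where b: "b \<notin> S \<union> N"
      using assms(1,3) by (meson finite_UnI obtain_fresh_name)
    have "\<forall>c \<in> S. \<langle>a \<leftrightarrow> b\<rangle> \<langle>$\<rangle> c = c"
      using \<open>a \<notin> S\<close> b by (auto simp: apply_swap)
    then have "act \<langle>a \<leftrightarrow> b\<rangle> x = x"
      using assms(2) unfolding supports_def by blast
    then have "\<langle>a \<leftrightarrow> b\<rangle> \<langle>$\<rangle> a \<in> N"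
      using stable \<open>a \<in> N\<close> by blast
    with b show False by simp
  qed
qed

lemma stable_support:
  assumes "finite N" "supports act N x" "\<And>p. act p x = x \<Longrightarrow> (\<langle>$\<rangle>) p ` N = N"
  shows stable_support_eq_supp: "supp act x = N"
    and stable_support_least:
      "\<exists>S. finite S \<and> supports act S x \<and> (\<forall>S'. finite S' \<and> supports act S' x \<longrightarrow> S \<subseteq> S')"
proof -
  have least: "N \<subseteq> S" if "finite S" "supports act S x" for S
    using that assms(1,3) by (rule supports_stable_subset)
  with assms(1,2) show "supp act x = N"
    unfolding supp_def by blast
  from least assms(1,2) show "\<exists>S. finite S \<and> supports act S x \<and> (\<forall>S'. finite S' \<and> supports act S' x \<longrightarrow> S \<subseteq> S')"
    by blast
qed

locale nominal =
  fixes X :: "'x set" and act :: "nperm \<Rightarrow> 'x \<Rightarrow> 'x"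
  assumes nominal_set: "nominal_set X act"
begin

lemma act_closed [intro]: "x \<in> X \<Longrightarrow> act p x \<in> X"
  using nominal_set unfolding nominal_set_def by blast

lemma act_one [simp]: "x \<in> X \<Longrightarrow> act 1 x = x"
  using nominal_set unfolding nominal_set_def by blast

lemma act_mult: "x \<in> X \<Longrightarrow> act (p * q) x = act p (act q x)"
  using nominal_set unfolding nominal_set_def by blast

lemma act_inverse [simp]: "x \<in> X \<Longrightarrow> act (inverse p) (act p x) = x"
  using act_mult[of x "inverse p" p] by simp

lemma
  assumes "x \<in> X"
  shows finite_supp: "finite (supp act x)"
    and supports_supp: "supports act (supp act x) x"
proof -
  obtain S where S: "finite S" "supports act S x"
      "\<And>S'. finite S' \<and> supports act S' x \<longrightarrow> S \<subseteq> S'"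
    using nominal_set assms unfolding nominal_set_def by metis
  then have "supp act x = S"
    unfolding supp_def by blast
  with S show "finite (supp act x)" "supports act (supp act x) x"
    by auto
qed

lemma act_cong_supp:
  assumes "x \<in> X" "\<And>a. a \<in> supp act x \<Longrightarrow> p \<langle>$\<rangle> a = q \<langle>$\<rangle> a"
  shows "act p x = act q x"
proof -
  have "act (inverse q * p) x = x"
    using supports_supp[OF assms(1)] assms(2) by (simp add: supports_def apply_times)
  then have "act q (act (inverse q * p) x) = act q x"
    by simp
  then show ?thesis
    using assms(1) by (simp add: act_mult[symmetric] mult.assoc[symmetric])
qed

lemma supp_act_subset: "x \<in> X \<Longrightarrow> supp act (act p x) \<subseteq> (\<langle>$\<rangle>) p ` supp act x"
proof (rule supp_subset_supports)
  assume x: "x \<in> X"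
  then show "finite ((\<langle>$\<rangle>) p ` supp act x)"
    by (simp add: finite_supp)
  show "supports act ((\<langle>$\<rangle>) p ` supp act x) (act p x)"
    unfolding supports_def
  proof (intro allI impI)
    fix s assume "\<forall>a \<in> (\<langle>$\<rangle>) p ` supp act x. s \<langle>$\<rangle> a = a"
    then have "act (s * p) x = act p x"
      using x by (intro act_cong_supp) (auto simp: apply_times)
    then show "act s (act p x) = act p x"
      using x by (simp add: act_mult)
  qed
qed

lemma supp_act: "x \<in> X \<Longrightarrow> supp act (act p x) = (\<langle>$\<rangle>) p ` supp act x"
proof
  assume x: "x \<in> X"
  then show "supp act (act p x) \<subseteq> (\<langle>$\<rangle>) p ` supp act x"
    by (rule supp_act_subset)
  have "supp act x \<subseteq> (\<langle>$\<rangle>) (inverse p) ` supp act (act p x)"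
    using supp_act_subset[of "act p x" "inverse p"] x by auto
  then show "(\<langle>$\<rangle>) p ` supp act x \<subseteq> supp act (act p x)"
    by force
qed

lemma supp_equivariant_subset:
  assumes "equivariant X act Y actY f" "x \<in> X"
  shows "supp actY (f x) \<subseteq> supp act x"
proof (rule supp_subset_supports)
  show "finite (supp act x)"
    using assms(2) by (rule finite_supp)
  show "supports actY (supp act x) (f x)"
    unfolding supports_def
  proof (intro allI impI)
    fix p assume "\<forall>a \<in> supp act x. p \<langle>$\<rangle> a = a"
    then have "act p x = x"
      using supports_supp[OF assms(2)] unfolding supports_def by blast
    then show "actY p (f x) = f x"
      using assms unfolding equivariant_def by metis
  qed
qed

section \<open>Name abstraction\<close>

lemma abs_rel_refl: "x \<in> X \<Longrightarrow> abs_rel act (a, x) (a, x)"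
proof -
  assume "x \<in> X"
  then obtain c where "c \<notin> insert a (supp act x)"
    using finite_supp by (meson finite_insert obtain_fresh_name)
  then show ?thesis
    unfolding abs_rel_def fresh_def by auto
qed

lemma abs_rel_sym: "abs_rel act (a, x) (b, y) \<Longrightarrow> abs_rel act (b, y) (a, x)"
  unfolding abs_rel_def by auto

text \<open>The witness in the definition of abs_rel is irrelevant: every sufficiently fresh name works.\<close>

lemma abs_rel_swap_eq:
  assumes "x \<in> X" "y \<in> X" "abs_rel act (a, x) (b, y)"
    and "c \<noteq> a" "c \<noteq> b" "c \<notin> supp act x" "c \<notin> supp act y"
  shows "act \<langle>a \<leftrightarrow> c\<rangle> x = act \<langle>b \<leftrightarrow> c\<rangle> y"
proof -
  obtain d where d: "d \<noteq> a" "d \<noteq> b" "d \<notin> supp act x" "d \<notin> supp act y"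
      "act \<langle>a \<leftrightarrow> d\<rangle> x = act \<langle>b \<leftrightarrow> d\<rangle> y"
    using assms(3) unfolding abs_rel_def fresh_def by auto
  have "act \<langle>a \<leftrightarrow> c\<rangle> x = act (\<langle>d \<leftrightarrow> c\<rangle> * \<langle>a \<leftrightarrow> d\<rangle>) x"
    using assms(6) d(3) by (intro act_cong_supp[OF assms(1)]) (metis swap_times_swap_apply)
  also have "\<dots> = act (\<langle>d \<leftrightarrow> c\<rangle> * \<langle>b \<leftrightarrow> d\<rangle>) y"
    using assms(1,2) d(5) by (simp add: act_mult)
  also have "\<dots> = act \<langle>b \<leftrightarrow> c\<rangle> y"
    using assms(7) d(4) by (intro act_cong_supp[OF assms(2)]) (metis swap_times_swap_apply)
  finally show ?thesis .
qed

lemma abs_rel_trans: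
  assumes "x \<in> X" "y \<in> X" "z \<in> X" "abs_rel act (a, x) (b, y)" "abs_rel act (b, y) (d, z)"
  shows "abs_rel act (a, x) (d, z)"
proof -
  obtain c where c: "c \<notin> {a, b, d} \<union> supp act x \<union> supp act y \<union> supp act z"
    using assms(1-3) finite_supp by (meson finite.emptyI finite.insertI finite_UnI obtain_fresh_name)
  have "act \<langle>a \<leftrightarrow> c\<rangle> x = act \<langle>b \<leftrightarrow> c\<rangle> y"
    using c by (intro abs_rel_swap_eq[OF assms(1,2,4)]) auto
  also have "\<dots> = act \<langle>d \<leftrightarrow> c\<rangle> z"
    using c by (intro abs_rel_swap_eq[OF assms(2,3,5)]) auto
  finally show ?thesis
    using c unfolding abs_rel_def fresh_def by blast
qed

lemma abs_class_self: "x \<in> X \<Longrightarrow> (a, x) \<in> abs_class X act (a, x)"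
  unfolding abs_class_def by (simp add: abs_rel_refl)

lemma abs_class_eq_iff:
  assumes "x \<in> X" "y \<in> X"
  shows "abs_class X act (a, x) = abs_class X act (b, y) \<longleftrightarrow> abs_rel act (a, x) (b, y)"
proof
  assume "abs_class X act (a, x) = abs_class X act (b, y)"
  then show "abs_rel act (a, x) (b, y)"
    using abs_class_self[OF assms(2)] unfolding abs_class_def by auto
next
  assume xy: "abs_rel act (a, x) (b, y)"
  have "abs_rel act (a, x) (d, z) \<longleftrightarrow> abs_rel act (b, y) (d, z)" if "z \<in> X" for d z
    using abs_rel_trans[OF assms that xy] abs_rel_trans[OF assms(2,1) that abs_rel_sym[OF xy]]
    by blast
  then show "abs_class X act (a, x) = abs_class X act (b, y)"
    unfolding abs_class_def by auto
qed

lemma some_abs_class: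
  assumes "x \<in> X"
  obtains b y where "(SOME q. q \<in> abs_class X act (a, x)) = (b, y)" "y \<in> X" "abs_rel act (a, x) (b, y)"
proof -
  obtain b y where by_eq: "(SOME q. q \<in> abs_class X act (a, x)) = (b, y)"
    by fastforce
  have "(SOME q. q \<in> abs_class X act (a, x)) \<in> abs_class X act (a, x)"
    using abs_class_self[OF assms] by (rule someI)
  then have "(b, y) \<in> abs_class X act (a, x)"
    unfolding by_eq .
  then have "y \<in> X" "abs_rel act (a, x) (b, y)"
    unfolding abs_class_def by simp_all
  with by_eq show ?thesis
    by (rule that)
qed

lemma abs_rel_act:
  assumes "x \<in> X" "y \<in> X" "abs_rel act (a, x) (b, y)"
  shows "abs_rel act (p \<langle>$\<rangle> a, act p x) (p \<langle>$\<rangle> b, act p y)"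
proof -
  obtain c where c: "c \<noteq> a" "c \<noteq> b" "c \<notin> supp act x" "c \<notin> supp act y"
      "act \<langle>a \<leftrightarrow> c\<rangle> x = act \<langle>b \<leftrightarrow> c\<rangle> y"
    using assms(3) unfolding abs_rel_def fresh_def by auto
  have "act \<langle>p \<langle>$\<rangle> a \<leftrightarrow> p \<langle>$\<rangle> c\<rangle> (act p x) = act p (act \<langle>a \<leftrightarrow> c\<rangle> x)"
    "act \<langle>p \<langle>$\<rangle> b \<leftrightarrow> p \<langle>$\<rangle> c\<rangle> (act p y) = act p (act \<langle>b \<leftrightarrow> c\<rangle> y)"
    using assms(1,2) by (simp_all add: act_mult[symmetric] swap_conj)
  moreover have "p \<langle>$\<rangle> c \<notin> supp act (act p x)" "p \<langle>$\<rangle> c \<notin> supp act (act p y)"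
    using assms(1,2) c(3,4) by (simp_all add: supp_act image_iff apply_inj)
  ultimately show ?thesis
    using c unfolding abs_rel_def fresh_def by (auto simp: apply_inj intro!: exI[of _ "p \<langle>$\<rangle> c"])
qed

lemma abs_act_abs_class:
  assumes "x \<in> X"
  shows "abs_act act p (abs_class X act (a, x)) = abs_class X act (p \<langle>$\<rangle> a, act p x)"
proof
  show "abs_act act p (abs_class X act (a, x)) \<subseteq> abs_class X act (p \<langle>$\<rangle> a, act p x)"
    unfolding abs_act_def abs_class_def using abs_rel_act assms by auto
  show "abs_class X act (p \<langle>$\<rangle> a, act p x) \<subseteq> abs_act act p (abs_class X act (a, x))"
  proof
    fix q assume q: "q \<in> abs_class X act (p \<langle>$\<rangle> a, act p x)"
    obtain b y where q_eq: "q = (b, y)"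
      by fastforce
    have y: "y \<in> X" "abs_rel act (p \<langle>$\<rangle> a, act p x) (b, y)"
      using q unfolding q_eq abs_class_def by auto
    then have "abs_rel act (a, x) (inverse p \<langle>$\<rangle> b, act (inverse p) y)"
      using abs_rel_act[of "act p x" y "p \<langle>$\<rangle> a" b "inverse p"] assms by auto
    then have "(inverse p \<langle>$\<rangle> b, act (inverse p) y) \<in> abs_class X act (a, x)"
      using y(1) unfolding abs_class_def by auto
    then show "q \<in> abs_act act p (abs_class X act (a, x))"
      unfolding abs_act_def q_eq using y(1)
      by (intro image_eqI[where x = "(inverse p \<langle>$\<rangle> b, act (inverse p) y)"]) (simp_all add: act_mult[symmetric])
  qed
qed

lemma abs_rel_swap_fresh:
  assumes "x \<in> X" "c \<notin> supp act x"
  shows "abs_rel act (a, x) (c, act \<langle>a \<leftrightarrow> c\<rangle> x)"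
proof -
  obtain d where d: "d \<notin> {a, c} \<union> supp act x"
    using assms(1) finite_supp by (meson finite.emptyI finite.insertI finite_UnI obtain_fresh_name)
  have "act \<langle>a \<leftrightarrow> d\<rangle> x = act (\<langle>c \<leftrightarrow> d\<rangle> * \<langle>a \<leftrightarrow> c\<rangle>) x"
    using assms(2) d by (intro act_cong_supp[OF assms(1)]) (metis UnCI swap_times_swap_apply)
  moreover have "d \<notin> supp act (act \<langle>a \<leftrightarrow> c\<rangle> x)"
  proof
    assume "d \<in> supp act (act \<langle>a \<leftrightarrow> c\<rangle> x)"
    then obtain e where "e \<in> supp act x" "\<langle>a \<leftrightarrow> c\<rangle> \<langle>$\<rangle> e = \<langle>a \<leftrightarrow> c\<rangle> \<langle>$\<rangle> d"
      using assms(1) d by (auto simp: supp_act)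
    with d show False
      by (auto simp: apply_swap split: if_splits)
  qed
  ultimately show ?thesis
    using assms(1) d unfolding abs_rel_def fresh_def prod.case by (intro exI[of _ d]) (simp add: act_mult)
qed

end

lemma abs_rel_equivariant:
  assumes "nominal X act" "nominal Y actY" "equivariant X act Y actY f" "x \<in> X" "y \<in> X"
    and "abs_rel act (a, x) (b, y)"
  shows "abs_rel actY (a, f x) (b, f y)"
proof -
  obtain c where c: "c \<noteq> a" "c \<noteq> b" "c \<notin> supp act x" "c \<notin> supp act y"
      "act \<langle>a \<leftrightarrow> c\<rangle> x = act \<langle>b \<leftrightarrow> c\<rangle> y"
    using assms(6) unfolding abs_rel_def fresh_def by auto
  have "c \<notin> supp actY (f x)" "c \<notin> supp actY (f y)"
    using nominal.supp_equivariant_subset[OF assms(1,3)] assms(4,5) c(3,4) by blast+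
  moreover have "actY \<langle>a \<leftrightarrow> c\<rangle> (f x) = actY \<langle>b \<leftrightarrow> c\<rangle> (f y)"
  proof -
    have "actY \<langle>a \<leftrightarrow> c\<rangle> (f x) = f (act \<langle>a \<leftrightarrow> c\<rangle> x)" "actY \<langle>b \<leftrightarrow> c\<rangle> (f y) = f (act \<langle>b \<leftrightarrow> c\<rangle> y)"
      using assms(3-5) unfolding equivariant_def by simp_all
    with c(5) show ?thesis
      by simp
  qed
  ultimately show ?thesis
    using c(1,2) unfolding abs_rel_def fresh_def by blast
qed

section \<open>Bar strings and alpha-equivalence\<close>

fun names :: "barstring \<Rightarrow> name set" where
  "names [] = {}"
| "names (Nm a # w) = insert a (names w)"
| "names (Bar a # w) = insert a (names w)"

fun free_names :: "barstring \<Rightarrow> name set" where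
  "free_names [] = {}"
| "free_names (Nm a # w) = insert a (free_names w)"
| "free_names (Bar a # w) = free_names w - {a}"

lemma bs_act_simps [simp]:
  "bs_act p [] = []"
  "bs_act p (Nm a # w) = Nm (p \<langle>$\<rangle> a) # bs_act p w"
  "bs_act p (Bar a # w) = Bar (p \<langle>$\<rangle> a) # bs_act p w"
  "bs_act p (v @ w) = bs_act p v @ bs_act p w"
  by (simp_all add: bs_act_def)

lemma bs_act_one [simp]: "bs_act 1 w = w"
proof (induction w)
  case (Cons b w)
  then show ?case
    by (cases b) simp_all
qed simp

lemma bs_act_mult: "bs_act (p * q) w = bs_act p (bs_act q w)"
proof (induction w)
  case (Cons b w)
  then show ?case
    by (cases b) (simp_all add: apply_times)
qed simp

lemma bs_act_cong: "(\<And>a. a \<in> names w \<Longrightarrow> p \<langle>$\<rangle> a = q \<langle>$\<rangle> a) \<Longrightarrow> bs_act p w = bs_act q w"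
proof (induction w)
  case (Cons b w)
  then show ?case
    by (cases b) simp_all
qed simp

lemma names_bs_act: "names (bs_act p w) = (\<langle>$\<rangle>) p ` names w"
proof (induction w)
  case (Cons b w)
  then show ?case
    by (cases b) simp_all
qed simp

lemma free_names_bs_act: "free_names (bs_act p w) = (\<langle>$\<rangle>) p ` free_names w"
proof (induction w)
  case (Cons b w)
  then show ?case
    by (cases b) (auto simp: apply_inj)
qed simp

lemma finite_names [simp]: "finite (names w)"
proof (induction w)
  case (Cons b w)
  then show ?case
    by (cases b) simp_all
qed simp

lemma free_names_subset_names: "free_names w \<subseteq> names w"
proof (induction w)
  case (Cons b w)
  then show ?case
    by (cases b) auto
qed simp

lemma supports_names: "supports bs_act (names w) w"
  unfolding supports_def using bs_act_cong[of w _ 1] by simp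

lemma names_stable: "bs_act p w = w \<Longrightarrow> (\<langle>$\<rangle>) p ` names w = names w"
  by (metis names_bs_act)

lemma supp_bs_act: "supp bs_act w = names w"
  by (rule stable_support_eq_supp[OF finite_names supports_names names_stable])

lemma nominal_bs_act: "nominal UNIV bs_act"
  unfolding nominal_def nominal_set_def
  using stable_support_least[OF finite_names supports_names names_stable]
  by (simp add: bs_act_mult)

interpretation bs: nominal UNIV bs_act
  by (rule nominal_bs_act)

lemma alpha_eq_append: "alpha_eq v w \<Longrightarrow> alpha_eq (u @ v) (u @ w)"
proof (induction rule: alpha_eq.induct)
  case (alpha_bind a v b w x)
  then show ?case
    using alpha_eq.alpha_bind[of a v b w "u @ x"] by simp
qed (auto intro: alpha_eq.intros)

lemma alpha_eq_Cons: "alpha_eq v w \<Longrightarrow> alpha_eq (b # v) (b # w)"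
  using alpha_eq_append[of v w "[b]"] by simp

lemma alpha_eq_bs_act: "alpha_eq v w \<Longrightarrow> alpha_eq (bs_act p v) (bs_act p w)"
proof (induction rule: alpha_eq.induct)
  case (alpha_bind a v b w x)
  then have "abs_class UNIV bs_act (p \<langle>$\<rangle> a, bs_act p v) = abs_class UNIV bs_act (p \<langle>$\<rangle> b, bs_act p w)"
    by (metis UNIV_I bs.abs_act_abs_class)
  then show ?case
    using alpha_eq.alpha_bind[of "p \<langle>$\<rangle> a" _ "p \<langle>$\<rangle> b" _ "bs_act p x"] by simp
qed (auto intro: alpha_eq.intros)

lemma image_swap_fresh_minus: "c \<notin> A \<Longrightarrow> (\<langle>$\<rangle>) \<langle>a \<leftrightarrow> c\<rangle> ` A - {c} = A - {a}"
  by (auto simp: apply_swap image_iff split: if_splits)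

lemma free_names_alpha_eq: "alpha_eq v w \<Longrightarrow> free_names v = free_names w"
proof (induction rule: alpha_eq.induct)
  case (alpha_bind a v b w x)
  then have "abs_rel bs_act (a, v) (b, w)"
    using bs.abs_class_eq_iff by blast
  then obtain c where c: "c \<notin> names v" "c \<notin> names w"
      "bs_act \<langle>a \<leftrightarrow> c\<rangle> v = bs_act \<langle>b \<leftrightarrow> c\<rangle> w"
    unfolding abs_rel_def fresh_def supp_bs_act by auto
  then have fresh: "c \<notin> free_names v" "c \<notin> free_names w"
    using free_names_subset_names by blast+
  have "free_names v - {a} = (\<langle>$\<rangle>) \<langle>a \<leftrightarrow> c\<rangle> ` free_names v - {c}"
    using image_swap_fresh_minus[OF fresh(1)] by simp
  also have "\<dots> = (\<langle>$\<rangle>) \<langle>b \<leftrightarrow> c\<rangle> ` free_names w - {c}"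
    using c(3) by (metis free_names_bs_act)
  also have "\<dots> = free_names w - {b}"
    using image_swap_fresh_minus[OF fresh(2)] .
  finally have "free_names (Bar a # v) = free_names (Bar b # w)"
    by simp
  then show ?case
  proof (induction x)
    case (Cons y x)
    then show ?case
      by (cases y) auto
  qed simp
qed auto

lemma alpha_eq_Bar_rename: "c \<notin> names w \<Longrightarrow> alpha_eq (Bar a # w) (Bar c # bs_act \<langle>a \<leftrightarrow> c\<rangle> w)"
  using bs.abs_rel_swap_fresh[of w c a] bs.abs_class_eq_iff alpha_eq.alpha_bind[of a w c _ "[]"]
  by (simp add: supp_bs_act)

lemma alpha_eq_Bar_swap:
  assumes "c \<notin> names v" "c \<notin> names w" "alpha_eq (bs_act \<langle>a \<leftrightarrow> c\<rangle> v) (bs_act \<langle>b \<leftrightarrow> c\<rangle> w)"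
  shows "alpha_eq (Bar a # v) (Bar b # w)"
proof -
  have "alpha_eq (Bar a # v) (Bar c # bs_act \<langle>a \<leftrightarrow> c\<rangle> v)"
    using assms(1) by (rule alpha_eq_Bar_rename)
  moreover have "alpha_eq (Bar c # bs_act \<langle>a \<leftrightarrow> c\<rangle> v) (Bar c # bs_act \<langle>b \<leftrightarrow> c\<rangle> w)"
    using assms(3) by (rule alpha_eq_Cons)
  moreover have "alpha_eq (Bar b # w) (Bar c # bs_act \<langle>b \<leftrightarrow> c\<rangle> w)"
    using assms(2) by (rule alpha_eq_Bar_rename)
  ultimately show ?thesis
    by (meson alpha_eq.alpha_sym alpha_eq.alpha_trans)
qed

text \<open>At a binder Bar a, with b = p a and c fresh, the permutation \<langle>a \<leftrightarrow> c\<rangle> * \<langle>b \<leftrightarrow> c\<rangle> * p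
  fixes a as well as the free names of the body, so the induction hypothesis applies to it.\<close>

lemma alpha_eq_bs_act_fixing_free_names:
  "(\<And>a. a \<in> free_names w \<Longrightarrow> p \<langle>$\<rangle> a = a) \<Longrightarrow> alpha_eq (bs_act p w) w"
proof (induction w arbitrary: p)
  case Nil
  then show ?case
    by (simp add: alpha_eq.alpha_refl)
next
  case (Cons x w)
  show ?case
  proof (cases x)
    case (Nm a)
    with Cons show ?thesis
      by (simp add: alpha_eq_Cons)
  next
    case (Bar a)
    define b where "b = p \<langle>$\<rangle> a"
    obtain c where c: "c \<notin> {a, b} \<union> names w \<union> names (bs_act p w)"
      by (meson finite.emptyI finite.insertI finite_UnI finite_names obtain_fresh_name)
    define s where "s = \<langle>a \<leftrightarrow> c\<rangle> * \<langle>b \<leftrightarrow> c\<rangle> * p"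
    have "s \<langle>$\<rangle> e = e" if "e \<in> free_names w" for e
    proof (cases "e = a")
      case False
      with Cons.prems Bar that have "p \<langle>$\<rangle> e = e"
        by simp
      moreover have "e \<noteq> c"
        using c that free_names_subset_names by blast
      ultimately show ?thesis
        using False unfolding s_def b_def by (auto simp: apply_times apply_swap apply_inj)
    qed (use c in \<open>simp add: s_def b_def apply_times\<close>)
    then have "alpha_eq (bs_act \<langle>a \<leftrightarrow> c\<rangle> (bs_act s w)) (bs_act \<langle>a \<leftrightarrow> c\<rangle> w)"
      by (intro alpha_eq_bs_act Cons.IH)
    moreover have "\<langle>a \<leftrightarrow> c\<rangle> * s = \<langle>b \<leftrightarrow> c\<rangle> * p"
      unfolding s_def by (simp add: mult.assoc[symmetric])
    ultimately have "alpha_eq (bs_act \<langle>b \<leftrightarrow> c\<rangle> (bs_act p w)) (bs_act \<langle>a \<leftrightarrow> c\<rangle> w)"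
      by (metis bs_act_mult)
    then have "alpha_eq (Bar b # bs_act p w) (Bar a # w)"
      using c by (intro alpha_eq_Bar_swap) auto
    then show ?thesis
      by (simp add: Bar b_def)
  qed
qed

section \<open>The algebra of alpha-equivalence classes\<close>

lemma mem_alpha_class_iff: "v \<in> alpha_class w \<longleftrightarrow> alpha_eq w v"
  by (simp add: alpha_class_def)

lemma alpha_class_eq_iff: "alpha_class v = alpha_class w \<longleftrightarrow> alpha_eq v w"
proof
  assume "alpha_class v = alpha_class w"
  then show "alpha_eq v w"
    by (metis alpha_eq.alpha_refl mem_alpha_class_iff)
next
  assume "alpha_eq v w"
  then have "alpha_eq v u \<longleftrightarrow> alpha_eq w u" for u
    by (meson alpha_eq.alpha_sym alpha_eq.alpha_trans)
  then show "alpha_class v = alpha_class w"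
    unfolding alpha_class_def by auto
qed

lemma alpha_class_in_BS_alpha [simp]: "alpha_class w \<in> BS_alpha"
  by (simp add: BS_alpha_def)

lemma BS_alphaE:
  assumes "C \<in> BS_alpha"
  obtains w where "C = alpha_class w"
  using assms unfolding BS_alpha_def by blast

lemma alpha_class_some: "C \<in> BS_alpha \<Longrightarrow> alpha_class (SOME w. w \<in> C) = C"
  by (metis BS_alphaE alpha_class_eq_iff mem_alpha_class_iff someI)

lemma BS_alpha_act_alpha_class: "BS_alpha_act p (alpha_class w) = alpha_class (bs_act p w)"
proof
  show "BS_alpha_act p (alpha_class w) \<subseteq> alpha_class (bs_act p w)"
    unfolding BS_alpha_act_def by (auto simp: mem_alpha_class_iff intro: alpha_eq_bs_act)
  show "alpha_class (bs_act p w) \<subseteq> BS_alpha_act p (alpha_class w)"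
  proof
    fix u assume "u \<in> alpha_class (bs_act p w)"
    then have "alpha_eq (bs_act p w) u"
      by (simp add: mem_alpha_class_iff)
    then have "alpha_eq (bs_act (inverse p) (bs_act p w)) (bs_act (inverse p) u)"
      by (rule alpha_eq_bs_act)
    then have "bs_act (inverse p) u \<in> alpha_class w"
      by (simp add: mem_alpha_class_iff bs_act_mult[symmetric] del: bs_act_simps)
    moreover have "u = bs_act p (bs_act (inverse p) u)"
      by (simp add: bs_act_mult[symmetric])
    ultimately show "u \<in> BS_alpha_act p (alpha_class w)"
      unfolding BS_alpha_act_def by blast
  qed
qed

lemma supports_free_names: "supports BS_alpha_act (free_names w) (alpha_class w)"
  unfolding supports_def
  using alpha_eq_bs_act_fixing_free_names alpha_class_eq_iff BS_alpha_act_alpha_class by metis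

lemma free_names_stable:
  assumes "BS_alpha_act p (alpha_class w) = alpha_class w"
  shows "(\<langle>$\<rangle>) p ` free_names w = free_names w"
proof -
  have "alpha_eq (bs_act p w) w"
    using assms by (simp add: BS_alpha_act_alpha_class alpha_class_eq_iff)
  then show ?thesis
    by (metis free_names_alpha_eq free_names_bs_act)
qed

lemma finite_free_names: "finite (free_names w)"
  using finite_names free_names_subset_names by (rule finite_subset[rotated])

lemma supp_alpha_class: "supp BS_alpha_act (alpha_class w) = free_names w"
  by (rule stable_support_eq_supp[OF finite_free_names supports_free_names free_names_stable])

lemma nominal_BS_alpha: "nominal BS_alpha BS_alpha_act"
  unfolding nominal_def nominal_set_def
  using stable_support_least[OF finite_free_names supports_free_names free_names_stable]
  by (auto elim!: BS_alphaE simp: BS_alpha_act_alpha_class bs_act_mult)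

interpretation BS: nominal BS_alpha BS_alpha_act
  by (rule nominal_BS_alpha)

lemma iota_Nm: "iota (Inr (Inl (a, alpha_class w))) = alpha_class (Nm a # w)"
  using alpha_class_some[of "alpha_class w"]
  by (simp add: alpha_class_eq_iff alpha_eq_Cons)

text \<open>iota picks an arbitrary representative (b, C) of the abstraction and an arbitrary string v
  in C; a name fresh for both w and v shows that Bar a # w and Bar b # v are alpha-equivalent.\<close>

lemma iota_Bar: "iota (Inr (Inr (abs_class BS_alpha BS_alpha_act (a, alpha_class w)))) = alpha_class (Bar a # w)"
proof -
  obtain b C where some_eq: "(SOME q. q \<in> abs_class BS_alpha BS_alpha_act (a, alpha_class w)) = (b, C)"
      and C: "C \<in> BS_alpha" "abs_rel BS_alpha_act (a, alpha_class w) (b, C)"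
    by (rule BS.some_abs_class[OF alpha_class_in_BS_alpha])
  define v where "v = (SOME v. v \<in> C)"
  have C_eq: "C = alpha_class v"
    unfolding v_def using alpha_class_some[OF C(1)] by simp
  obtain c where c: "c \<notin> {a, b} \<union> names w \<union> names v"
    by (meson finite.emptyI finite.insertI finite_UnI finite_names obtain_fresh_name)
  then have "c \<notin> supp BS_alpha_act (alpha_class w)" "c \<notin> supp BS_alpha_act (alpha_class v)"
    using free_names_subset_names by (auto simp: supp_alpha_class)
  then have "BS_alpha_act \<langle>a \<leftrightarrow> c\<rangle> (alpha_class w) = BS_alpha_act \<langle>b \<leftrightarrow> c\<rangle> (alpha_class v)"
    using c C(2) unfolding C_eq by (intro BS.abs_rel_swap_eq) auto
  then have "alpha_eq (bs_act \<langle>a \<leftrightarrow> c\<rangle> w) (bs_act \<langle>b \<leftrightarrow> c\<rangle> v)"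
    by (simp add: BS_alpha_act_alpha_class alpha_class_eq_iff)
  then have "alpha_eq (Bar a # w) (Bar b # v)"
    using c by (intro alpha_eq_Bar_swap) auto
  then show ?thesis
    using some_eq by (simp add: v_def[symmetric] alpha_class_eq_iff alpha_eq.alpha_sym)
qed

lemma F_carrier_unit: "Inl () \<in> F_carrier X act"
  by (simp add: F_carrier_def)

lemma F_carrier_pair: "x \<in> X \<Longrightarrow> Inr (Inl (a, x)) \<in> F_carrier X act"
  by (simp add: F_carrier_def)

lemma F_carrier_abs: "x \<in> X \<Longrightarrow> Inr (Inr (abs_class X act (a, x))) \<in> F_carrier X act"
  unfolding F_carrier_def abs_set_def by blast

lemma F_carrierE:
  assumes "z \<in> F_carrier X act"
  obtains "z = Inl ()"
  | a x where "x \<in> X" "z = Inr (Inl (a, x))"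
  | a x where "x \<in> X" "z = Inr (Inr (abs_class X act (a, x)))"
  using assms unfolding F_carrier_def abs_set_def by blast

lemma F_algebra_BS_alpha: "F_algebra BS_alpha BS_alpha_act iota"
  unfolding F_algebra_def equivariant_def
proof (intro conjI ballI allI)
  show "nominal_set BS_alpha BS_alpha_act"
    using nominal_BS_alpha by (simp add: nominal_def)
next
  fix z assume "z \<in> F_carrier BS_alpha BS_alpha_act"
  then show "iota z \<in> BS_alpha"
    by (cases rule: F_carrierE) (auto elim!: BS_alphaE simp del: iota.simps(2,3) simp: iota_Nm iota_Bar)
next
  fix p z assume "z \<in> F_carrier BS_alpha BS_alpha_act"
  then show "iota (F_act BS_alpha_act p z) = BS_alpha_act p (iota z)"
    by (cases rule: F_carrierE)
      (auto elim!: BS_alphaE simp del: iota.simps(2,3)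
        simp: iota_Nm iota_Bar BS_alpha_act_alpha_class BS.abs_act_abs_class)
qed

section \<open>Initiality\<close>

lemma F_map_abs_class:
  assumes "nominal X act" "nominal Y actY" "equivariant X act Y actY h" "x \<in> X"
  shows "F_map Y actY h (Inr (Inr (abs_class X act (a, x)))) = Inr (Inr (abs_class Y actY (a, h x)))"
proof -
  obtain b y where some_eq: "(SOME q. q \<in> abs_class X act (a, x)) = (b, y)"
      and y: "y \<in> X" "abs_rel act (a, x) (b, y)"
    by (rule nominal.some_abs_class[OF assms(1,4)])
  have "abs_rel actY (b, h y) (a, h x)"
    using abs_rel_equivariant[OF assms(1-4) y] by (rule nominal.abs_rel_sym[OF assms(2)])
  moreover have "h x \<in> Y" "h y \<in> Y"
    using assms(3,4) y(1) unfolding equivariant_def by blast+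
  ultimately have "abs_class Y actY (b, h y) = abs_class Y actY (a, h x)"
    by (simp add: nominal.abs_class_eq_iff[OF assms(2)])
  with some_eq show ?thesis
    by simp
qed

locale nominal_F_algebra =
  fixes Y :: "'y set" and actY :: "nperm \<Rightarrow> 'y \<Rightarrow> 'y" and g :: "'y F \<Rightarrow> 'y"
  assumes F_algebra: "F_algebra Y actY g"
begin

sublocale nominal Y actY
  using F_algebra by (simp add: F_algebra_def nominal_def)

lemma g_closed: "z \<in> F_carrier Y actY \<Longrightarrow> g z \<in> Y"
  using F_algebra unfolding F_algebra_def equivariant_def by blast

lemma g_equivariant: "z \<in> F_carrier Y actY \<Longrightarrow> g (F_act actY p z) = actY p (g z)"
  using F_algebra unfolding F_algebra_def equivariant_def by blast

fun bs_fold :: "barstring \<Rightarrow> 'y" where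
  "bs_fold [] = g (Inl ())"
| "bs_fold (Nm a # w) = g (Inr (Inl (a, bs_fold w)))"
| "bs_fold (Bar a # w) = g (Inr (Inr (abs_class Y actY (a, bs_fold w))))"

lemma bs_fold_closed: "bs_fold w \<in> Y"
proof (induction w)
  case Nil
  then show ?case
    by (simp add: g_closed F_carrier_unit)
next
  case (Cons x w)
  then show ?case
    by (cases x) (simp_all add: g_closed F_carrier_pair F_carrier_abs)
qed

lemma bs_fold_bs_act: "bs_fold (bs_act p w) = actY p (bs_fold w)"
proof (induction w)
  case Nil
  then show ?case
    using g_equivariant[OF F_carrier_unit] by simp
next
  case (Cons x w)
  then show ?case
    using g_equivariant[OF F_carrier_pair[OF bs_fold_closed]] g_equivariant[OF F_carrier_abs[OF bs_fold_closed]]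
    by (cases x) (simp_all add: abs_act_abs_class[OF bs_fold_closed])
qed

lemma equivariant_bs_fold: "equivariant UNIV bs_act Y actY bs_fold"
  unfolding equivariant_def by (simp add: bs_fold_closed bs_fold_bs_act)

lemma bs_fold_alpha_eq: "alpha_eq v w \<Longrightarrow> bs_fold v = bs_fold w"
proof (induction rule: alpha_eq.induct)
  case (alpha_bind a v b w x)
  then have "abs_rel bs_act (a, v) (b, w)"
    using bs.abs_class_eq_iff by blast
  then have "abs_rel actY (a, bs_fold v) (b, bs_fold w)"
    by (rule abs_rel_equivariant[OF nominal_bs_act nominal_axioms equivariant_bs_fold UNIV_I UNIV_I])
  then have "abs_class Y actY (a, bs_fold v) = abs_class Y actY (b, bs_fold w)"
    by (simp add: abs_class_eq_iff bs_fold_closed)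
  then have "bs_fold (Bar a # v) = bs_fold (Bar b # w)"
    by simp
  then show ?case
  proof (induction x)
    case (Cons y x)
    then show ?case
      by (cases y) simp_all
  qed simp
qed simp_all

definition alpha_fold :: "barstring set \<Rightarrow> 'y" where
  "alpha_fold C = bs_fold (SOME w. w \<in> C)"

lemma alpha_fold_alpha_class [simp]: "alpha_fold (alpha_class w) = bs_fold w"
  using alpha_class_some[of "alpha_class w"]
  by (simp add: alpha_fold_def alpha_class_eq_iff bs_fold_alpha_eq)

lemma equivariant_alpha_fold: "equivariant BS_alpha BS_alpha_act Y actY alpha_fold"
  unfolding equivariant_def
  by (auto elim!: BS_alphaE simp: BS_alpha_act_alpha_class bs_fold_closed bs_fold_bs_act)

lemma F_alg_hom_iff:
  assumes h: "equivariant BS_alpha BS_alpha_act Y actY h"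
  shows "F_alg_hom BS_alpha BS_alpha_act iota Y actY g h \<longleftrightarrow>
    h (alpha_class []) = g (Inl ()) \<and>
    (\<forall>a w. h (alpha_class (Nm a # w)) = g (Inr (Inl (a, h (alpha_class w))))) \<and>
    (\<forall>a w. h (alpha_class (Bar a # w)) = g (Inr (Inr (abs_class Y actY (a, h (alpha_class w))))))"
  (is "_ \<longleftrightarrow> ?equations")
proof -
  (* The equations of iota and F_map on Nm and Bar go through SOME; they are replaced below by
     the choice-free forms iota_Nm, iota_Bar and F_map_Bar. *)
  note F_map_Bar = F_map_abs_class[OF nominal_BS_alpha nominal_axioms h alpha_class_in_BS_alpha]
  have "F_alg_hom BS_alpha BS_alpha_act iota Y actY g h \<longleftrightarrow>
      (\<forall>z \<in> F_carrier BS_alpha BS_alpha_act. h (iota z) = g (F_map Y actY h z))"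
    using h unfolding F_alg_hom_def by simp
  also have "\<dots> \<longleftrightarrow> ?equations"
  proof
    assume hom: "\<forall>z \<in> F_carrier BS_alpha BS_alpha_act. h (iota z) = g (F_map Y actY h z)"
    show ?equations
      using hom[rule_format, OF F_carrier_unit]
        hom[rule_format, OF F_carrier_pair[OF alpha_class_in_BS_alpha]]
        hom[rule_format, OF F_carrier_abs[OF alpha_class_in_BS_alpha]]
      by (simp add: iota_Nm iota_Bar F_map_Bar del: iota.simps(2,3) F_map.simps(3))
  next
    assume ?equations
    then show "\<forall>z \<in> F_carrier BS_alpha BS_alpha_act. h (iota z) = g (F_map Y actY h z)"
      by (auto elim!: F_carrierE BS_alphaE simp: iota_Nm iota_Bar F_map_Bar simp del: iota.simps(2,3) F_map.simps(3))
  qed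
  finally show ?thesis .
qed

lemma F_alg_hom_alpha_fold: "F_alg_hom BS_alpha BS_alpha_act iota Y actY g alpha_fold"
  by (simp add: F_alg_hom_iff[OF equivariant_alpha_fold])

lemma F_alg_hom_unique:
  assumes "F_alg_hom BS_alpha BS_alpha_act iota Y actY g h" "C \<in> BS_alpha"
  shows "h C = alpha_fold C"
proof -
  have "equivariant BS_alpha BS_alpha_act Y actY h"
    using assms(1) unfolding F_alg_hom_def by blast
  with assms(1) have eqs:
    "h (alpha_class []) = g (Inl ())"
    "\<And>a w. h (alpha_class (Nm a # w)) = g (Inr (Inl (a, h (alpha_class w))))"
    "\<And>a w. h (alpha_class (Bar a # w)) = g (Inr (Inr (abs_class Y actY (a, h (alpha_class w)))))"
    by (simp_all add: F_alg_hom_iff)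
  have "h (alpha_class w) = bs_fold w" for w
  proof (induction w)
    case (Cons x w)
    then show ?case
      by (cases x) (simp_all add: eqs)
  qed (simp add: eqs)
  with assms(2) show ?thesis
    by (auto elim: BS_alphaE)
qed

end

theorem proposition3p19:
  "initial_F_algebra BS_alpha BS_alpha_act iota TYPE('y)"
  unfolding initial_F_algebra_def
proof (intro conjI allI impI)
  show "F_algebra BS_alpha BS_alpha_act iota"
    by (rule F_algebra_BS_alpha)
  fix Y :: "'y set" and actY g
  assume "F_algebra Y actY g"
  then interpret nominal_F_algebra Y actY g
    by (rule nominal_F_algebra.intro)
  show "\<exists>h. F_alg_hom BS_alpha BS_alpha_act iota Y actY g h \<and>
      (\<forall>h'. F_alg_hom BS_alpha BS_alpha_act iota Y actY g h' \<longrightarrow> (\<forall>x \<in> BS_alpha. h' x = h x))"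
    using F_alg_hom_alpha_fold F_alg_hom_unique by blast
qed

end
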